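(* Let $F(d)=1/d^2$ and let $(x_n)_{n\in\mathbb Z}$ be a uniformly discrete equilibrium configuration for $F$ having a periodic tail, i.e. there exist $N\in\mathbb Z$, an integer $k\ge1$ and a real $t>0$ such that $x_{n+k}=x_n+t$ for all $n\ge N$ (or for all $n\le N$). Then the configuration is trivial, i.e. $x_{n+1}-x_n$ is constant.
   Context: A configuration is a strictly increasing bi-infinite sequence $(x_n)_{n\in\mathbb Z}$ of reals; it is uniformly discrete if there are constants $0<c\le C<\infty$ with $c\le x_n-x_{n-1}\le C$ for all $n$. The particle at $x_n$ is in equilibrium if $\sum_{m<n}F(x_n-x_m)$ and $\sum_{m>n}F(x_m-x_n)$ are both finite and equal; an equilibrium configuration is one in which every particle is in equilibrium. It is trivial if it is an arithmetic progression. *)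

theory Defs
  imports "HOL-Analysis.Analysis"
begin

definition configuration :: "(int \<Rightarrow> real) \<Rightarrow> bool" where
  "configuration x \<longleftrightarrow> strict_mono x"

definition uniformly_discrete :: "(int \<Rightarrow> real) \<Rightarrow> bool" where
  "uniformly_discrete x \<longleftrightarrow>
     (\<exists>c C. 0 < c \<and> c \<le> C \<and> (\<forall>n. c \<le> x n - x (n - 1) \<and> x n - x (n - 1) \<le> C))"

definition in_equilibrium :: "(real \<Rightarrow> real) \<Rightarrow> (int \<Rightarrow> real) \<Rightarrow> int \<Rightarrow> bool" where
  "in_equilibrium F x n \<longleftrightarrow>
     (\<lambda>m. F (x n - x m)) summable_on {m. m < n} \<and>
     (\<lambda>m. F (x m - x n)) summable_on {m. m > n} \<and>
     (\<Sum>\<^sub>\<infinity>m\<in>{m. m < n}. F (x n - x m)) = (\<Sum>\<^sub>\<infinity>m\<in>{m. m > n}. F (x m - x n))"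

definition equilibrium_configuration :: "(real \<Rightarrow> real) \<Rightarrow> (int \<Rightarrow> real) \<Rightarrow> bool" where
  "equilibrium_configuration F x \<longleftrightarrow> configuration x \<and> (\<forall>n. in_equilibrium F x n)"

definition trivial_configuration :: "(int \<Rightarrow> real) \<Rightarrow> bool" where
  "trivial_configuration x \<longleftrightarrow> (\<exists>d. \<forall>n. x (n + 1) - x n = d)"

end

theory Submission
  imports Defs
begin

text \<open>
  Subtracting the equilibrium equation of particle n+1 from that of particle n, with every
  index shifted by one, shows that the spacings g n = x (n+1) - x n satisfy
  \<open>\<Sum>m. w n m (g m - g n) = 0\<close> for symmetric positive weights w n m of order \<open>|m - n|^(-3)\<close>:
  g is a bounded harmonic function of a long-range random walk. Such functions are constant.
  A Caccioppoli inequality with a tent cutoff of width L bounds the Dirichlet energy of g by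
  the energy of the cutoff, which is O(K/L + 1/K) after splitting the kernel at distance K;
  with L = K^2 this tends to 0.
\<close>

section \<open>A discrete Caccioppoli inequality\<close>

lemma cutoff_product_lower_bound:
  fixes a b u v G :: real
  assumes "\<bar>a\<bar> \<le> G" "\<bar>b\<bar> \<le> G"
  shows "(b - a) * (v^2 * b - u^2 * a) \<ge> ((u^2 + v^2) / 2) * (b - a)^2 / 2 - 2 * G^2 * (v - u)^2"
proof -
  define p where "p = \<bar>v + u\<bar> * \<bar>b - a\<bar>"
  define q where "q = G * \<bar>v - u\<bar>"
  have split: "(b - a) * (v^2 * b - u^2 * a)
      = ((u^2 + v^2) / 2) * (b - a)^2 + ((a + b) / 2) * ((v + u) * (v - u)) * (b - a)"
    by (simp add: field_simps power2_eq_square)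
  have "\<bar>((a + b) / 2) * ((v + u) * (v - u)) * (b - a)\<bar> = \<bar>(a + b) / 2\<bar> * (p * \<bar>v - u\<bar>)"
    by (simp add: p_def abs_mult)
  also have "\<dots> \<le> G * (p * \<bar>v - u\<bar>)"
    using assms by (intro mult_right_mono) (auto simp: p_def)
  also have "\<dots> = p * q" by (simp add: q_def)
  also have "p * q \<le> p^2 / 8 + 2 * q^2"
    using zero_le_power2[of "p - 4 * q"] by (simp add: power2_eq_square algebra_simps)
  also have "p^2 \<le> 2 * (u^2 + v^2) * (b - a)^2"
  proof -
    have "(v + u)^2 \<le> 2 * (u^2 + v^2)"
      using zero_le_power2[of "u - v"] by (simp add: power2_eq_square algebra_simps)
    then show ?thesis
      unfolding p_def by (simp add: power_mult_distrib mult_right_mono)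
  qed
  finally have "\<bar>((a + b) / 2) * ((v + u) * (v - u)) * (b - a)\<bar>
      \<le> ((u^2 + v^2) / 2) * (b - a)^2 / 2 + 2 * G^2 * (v - u)^2"
    by (simp add: q_def power_mult_distrib field_simps)
  then show ?thesis
    unfolding split by linarith
qed

lemma discrete_caccioppoli:
  fixes w :: "int \<Rightarrow> int \<Rightarrow> real" and g \<eta> :: "int \<Rightarrow> real" and P :: "int set"
  assumes "finite P" and w_sym: "\<And>n m. w n m = w m n" and w_nonneg: "\<And>n m. 0 \<le> w n m"
    and g_bound: "\<And>n. \<bar>g n\<bar> \<le> G"
  shows "(\<Sum>n\<in>P. \<Sum>m\<in>P. w n m * ((\<eta> n^2 + \<eta> m^2) / 2) * (g m - g n)^2)
    \<le> -4 * (\<Sum>n\<in>P. \<eta> n^2 * g n * (\<Sum>m\<in>P. w n m * (g m - g n)))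
       + 4 * G^2 * (\<Sum>n\<in>P. \<Sum>m\<in>P. w n m * (\<eta> m - \<eta> n)^2)"
proof -
  define \<phi> where "\<phi> n = \<eta> n^2 * g n" for n
  define A where "A = (\<Sum>n\<in>P. \<Sum>m\<in>P. w n m * (g m - g n) * \<phi> n)"
  define S where "S = (\<Sum>n\<in>P. \<Sum>m\<in>P. w n m * (g m - g n) * (\<phi> m - \<phi> n))"
  \<comment> \<open>summation by parts: the symmetry of w turns the pairing with \<open>\<phi> m - \<phi> n\<close> into \<open>-2 A\<close>\<close>
  have "(\<Sum>n\<in>P. \<Sum>m\<in>P. w n m * (g m - g n) * \<phi> m) = (\<Sum>m\<in>P. \<Sum>n\<in>P. w n m * (g m - g n) * \<phi> m)"
    by (rule sum.swap)
  also have "\<dots> = (\<Sum>m\<in>P. \<Sum>n\<in>P. - (w m n * (g n - g m) * \<phi> m))"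
    by (intro sum.cong refl, subst w_sym) (simp add: algebra_simps)
  also have "\<dots> = - A" by (simp add: A_def sum_negf)
  finally have S_eq: "S = -2 * A"
    by (simp add: S_def A_def right_diff_distrib sum_subtractf)
  have A_eq: "A = (\<Sum>n\<in>P. \<eta> n^2 * g n * (\<Sum>m\<in>P. w n m * (g m - g n)))"
    by (simp add: A_def \<phi>_def sum_distrib_left mult_ac)
  have "w n m * (((\<eta> n^2 + \<eta> m^2) / 2) * (g m - g n)^2 / 2 - 2 * G^2 * (\<eta> m - \<eta> n)^2)
      \<le> w n m * (g m - g n) * (\<phi> m - \<phi> n)" for n m
    using mult_left_mono[OF cutoff_product_lower_bound[OF g_bound g_bound] w_nonneg]
    by (simp add: \<phi>_def mult_ac)
  then have "(\<Sum>n\<in>P. \<Sum>m\<in>P. w n m * (((\<eta> n^2 + \<eta> m^2) / 2) * (g m - g n)^2 / 2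
      - 2 * G^2 * (\<eta> m - \<eta> n)^2)) \<le> S"
    unfolding S_def by (intro sum_mono)
  moreover have "(\<Sum>n\<in>P. \<Sum>m\<in>P. w n m * (((\<eta> n^2 + \<eta> m^2) / 2) * (g m - g n)^2 / 2
      - 2 * G^2 * (\<eta> m - \<eta> n)^2))
     = (\<Sum>n\<in>P. \<Sum>m\<in>P. w n m * ((\<eta> n^2 + \<eta> m^2) / 2) * (g m - g n)^2) / 2
       - 2 * G^2 * (\<Sum>n\<in>P. \<Sum>m\<in>P. w n m * (\<eta> m - \<eta> n)^2)"
    by (simp add: right_diff_distrib sum_subtractf sum_divide_distrib sum_distrib_left mult_ac)
  ultimately show ?thesis
    using S_eq A_eq by linarith
qed

section \<open>Energy of a tent function\<close>

definition tent :: "int \<Rightarrow> nat \<Rightarrow> int \<Rightarrow> real" where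
  "tent a L n = max 0 (1 - real_of_int \<bar>n - a\<bar> / L)"

lemma tent_center [simp]: "tent a L a = 1"
  by (simp add: tent_def)

lemma tent_nonneg: "0 \<le> tent a L n"
  by (simp add: tent_def)

lemma tent_le_one: "tent a L n \<le> 1"
  by (simp add: tent_def)

lemma tent_eq_0:
  assumes "L \<ge> 1" "int L \<le> \<bar>n - a\<bar>"
  shows "tent a L n = 0"
  using assms by (simp add: tent_def field_simps)

lemma tent_lipschitz:
  assumes "L \<ge> 1"
  shows "\<bar>tent a L m - tent a L n\<bar> \<le> real_of_int \<bar>m - n\<bar> / L"
proof -
  have "(1 - real_of_int \<bar>m - a\<bar> / L) - (1 - real_of_int \<bar>n - a\<bar> / L)
      = (real_of_int \<bar>n - a\<bar> - real_of_int \<bar>m - a\<bar>) / L"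
    using assms by (simp add: field_simps)
  also have "\<bar>\<dots>\<bar> \<le> real_of_int \<bar>m - n\<bar> / L"
    unfolding abs_divide abs_of_nat using assms by (intro divide_right_mono) auto
  finally have "\<bar>(1 - real_of_int \<bar>m - a\<bar> / L) - (1 - real_of_int \<bar>n - a\<bar> / L)\<bar> \<le> real_of_int \<bar>m - n\<bar> / L" .
  moreover have "\<bar>max 0 s - max 0 r\<bar> \<le> \<bar>s - r\<bar>" for s r :: real
    by (auto simp: max_def)
  ultimately show ?thesis
    unfolding tent_def by (rule order_trans[rotated])
qed

lemma sq_div_cube_le:
  fixes d r :: real and L :: nat
  assumes L: "L \<ge> 1" and r: "r \<ge> 1" and d_lip: "\<bar>d\<bar> \<le> r / L" and d_one: "\<bar>d\<bar> \<le> 1"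
  shows "d^2 / r ^ 3 \<le> 1 / real L ^ 2"
    and "r \<ge> 2 \<Longrightarrow> d^2 / r ^ 3 \<le> 1 / (real L * r * (r - 1))"
proof -
  have "\<bar>d\<bar>^2 \<le> (r / L)^2" "\<bar>d\<bar>^2 \<le> 1^2"
    using d_lip d_one by (intro power_mono; simp)+
  then have "d^2 / r ^ 3 \<le> (r / L)^2 / r ^ 3" and far: "d^2 / r ^ 3 \<le> 1 / r ^ 3"
    using r by (simp_all add: divide_right_mono)
  moreover have "(r / L)^2 / r ^ 3 = 1 / (real L * (real L * r))"
    using L r by (simp add: field_simps power2_eq_square power3_eq_cube)
  ultimately have near: "d^2 / r ^ 3 \<le> 1 / (real L * (real L * r))"
    by simp
  show "d^2 / r ^ 3 \<le> 1 / real L ^ 2"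
  proof (cases "r \<le> L")
    case True
    have "1 / (real L * (real L * r)) \<le> 1 / real L ^ 2"
      using L r by (intro frac_le) (simp_all add: power2_eq_square)
    with near show ?thesis
      by linarith
  next
    case False
    have "real L ^ 2 \<le> r ^ 2" "r ^ 2 \<le> r ^ 3"
      using False L r by (simp_all add: power_mono power_increasing)
    then have "1 / r ^ 3 \<le> 1 / real L ^ 2"
      using L by (intro frac_le) simp_all
    with far show ?thesis
      by linarith
  qed
  assume r2: "r \<ge> 2"
  have pos: "0 < real L * r * (r - 1)"
    using L r2 by simp
  show "d^2 / r ^ 3 \<le> 1 / (real L * r * (r - 1))"
  proof (cases "r \<le> L")
    case True
    have "real L * r * (r - 1) \<le> real L * (real L * r)"
      using True r by (simp add: mult_left_mono)
    then have "1 / (real L * (real L * r)) \<le> 1 / (real L * r * (r - 1))"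
      using pos by (intro frac_le) simp_all
    with near show ?thesis
      by linarith
  next
    case False
    have "real L * (r - 1) \<le> r * r"
      using False r by (intro mult_mono) auto
    from mult_left_mono[OF this, of r] have "real L * r * (r - 1) \<le> r ^ 3"
      using r by (simp add: power3_eq_cube mult_ac)
    then have "1 / r ^ 3 \<le> 1 / (real L * r * (r - 1))"
      using pos by (intro frac_le) simp_all
    with far show ?thesis
      by linarith
  qed
qed

text \<open>A majorant of \<open>(tent a L m - tent a L n)^2 / |m - n|^3\<close> in terms of \<open>i = m - n\<close>: the
  Lipschitz bound is used up to distance K, the bound 1 beyond.\<close>

definition truncated_kernel :: "nat \<Rightarrow> nat \<Rightarrow> int \<Rightarrow> real" where
  "truncated_kernel L K i =
     (if i = 0 then 0 else if \<bar>i\<bar> \<le> int K then 1 / real L ^ 2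
      else 1 / (real L * real_of_int \<bar>i\<bar> * (real_of_int \<bar>i\<bar> - 1)))"

lemma truncated_kernel_nonneg: "0 \<le> truncated_kernel L K i"
  by (simp add: truncated_kernel_def)

lemma truncated_kernel_minus: "truncated_kernel L K (- i) = truncated_kernel L K i"
  by (simp add: truncated_kernel_def)

lemma tent_diff_le_truncated_kernel:
  assumes L: "L \<ge> 1" and K: "K \<ge> 1" and "m \<noteq> n"
  shows "(tent a L m - tent a L n)^2 / real_of_int \<bar>m - n\<bar> ^ 3 \<le> truncated_kernel L K (m - n)"
proof -
  define r where "r = real_of_int \<bar>m - n\<bar>"
  have r: "r \<ge> 1"
    using \<open>m \<noteq> n\<close> by (simp add: r_def)
  have lip: "\<bar>tent a L m - tent a L n\<bar> \<le> r / L"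
    unfolding r_def by (rule tent_lipschitz[OF L])
  have one: "\<bar>tent a L m - tent a L n\<bar> \<le> 1"
    using tent_nonneg[of a L m] tent_nonneg[of a L n] tent_le_one[of a L m] tent_le_one[of a L n]
    by (simp add: abs_le_iff)
  show ?thesis
  proof (cases "\<bar>m - n\<bar> \<le> int K")
    case True
    then show ?thesis
      using sq_div_cube_le(1)[OF L r lip one] \<open>m \<noteq> n\<close> by (simp add: truncated_kernel_def r_def)
  next
    case False
    then have "r \<ge> 2"
      using K by (simp add: r_def)
    then show ?thesis
      using sq_div_cube_le(2)[OF L r lip one] False by (simp add: truncated_kernel_def r_def)
  qed
qed

lemma sum_inverse_pronic:
  fixes K J :: int
  assumes "K \<ge> 1" "J \<ge> K"
  shows "(\<Sum>i\<in>{K+1..J}. 1 / (real_of_int i * (real_of_int i - 1))) = 1 / K - 1 / J"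
  using assms(2)
proof (induction J rule: int_ge_induct)
  case (step J)
  have "{K+1..J+1} = insert (J+1) {K+1..J}"
    using step by auto
  moreover have "1 / (real_of_int (J + 1) * real_of_int J) = 1 / J - 1 / (J + 1)"
    using step assms by (simp add: field_simps)
  ultimately show ?case
    using step by simp
qed simp

lemma sum_truncated_kernel_le:
  fixes J :: int
  assumes L: "L \<ge> 1" and K: "K \<ge> 1"
  shows "(\<Sum>i\<in>{1..J}. truncated_kernel L K i) \<le> K / real L ^ 2 + 1 / (real L * K)"
proof -
  define J' where "J' = max J (int K)"
  have "(\<Sum>i\<in>{1..J}. truncated_kernel L K i) \<le> (\<Sum>i\<in>{1..J'}. truncated_kernel L K i)"
    by (intro sum_mono2) (auto simp: J'_def truncated_kernel_nonneg)
  also have "\<dots> = (\<Sum>i\<in>{1..int K}. truncated_kernel L K i) + (\<Sum>i\<in>{int K+1..J'}. truncated_kernel L K i)"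
    by (subst sum.union_disjoint[symmetric]) (auto simp: J'_def intro!: sum.cong)
  also have "(\<Sum>i\<in>{1..int K}. truncated_kernel L K i) = K / real L ^ 2"
    by (simp add: truncated_kernel_def)
  also have "(\<Sum>i\<in>{int K+1..J'}. truncated_kernel L K i)
      = (\<Sum>i\<in>{int K+1..J'}. 1 / (real_of_int i * (real_of_int i - 1))) / L"
    by (simp add: sum_divide_distrib truncated_kernel_def, intro sum.cong) (auto simp: field_simps)
  also have "\<dots> = (1 / K - 1 / J') / L"
    using sum_inverse_pronic[of "int K" J'] K by (simp add: J'_def)
  also have "\<dots> \<le> 1 / (real L * K)"
    using K L by (simp add: J'_def field_simps)
  finally show ?thesis by simp
qed

lemma sum_shifted_even_le:
  fixes u :: "int \<Rightarrow> real" and n J :: int and Q :: "int set"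
  assumes "Q \<subseteq> {n-J..n+J}" "\<And>i. 0 \<le> u i" "\<And>i. u (- i) = u i" "u 0 = 0" "0 \<le> J"
  shows "(\<Sum>m\<in>Q. u (m - n)) \<le> 2 * (\<Sum>i\<in>{1..J}. u i)"
proof -
  have "(\<Sum>m\<in>Q. u (m - n)) \<le> (\<Sum>m\<in>{n-J..n+J}. u (m - n))"
    using assms by (intro sum_mono2) auto
  also have "\<dots> = (\<Sum>i\<in>{-J..J}. u i)"
    by (rule sum.reindex_bij_witness[of _ "\<lambda>i. i + n" "\<lambda>m. m - n"]) auto
  also have "{-J..J} = {-J..-1} \<union> {0} \<union> {1..J}"
    using \<open>0 \<le> J\<close> by auto
  also have "(\<Sum>i\<in>{-J..-1} \<union> {0} \<union> {1..J}. u i) = (\<Sum>i\<in>{-J..-1}. u i) + u 0 + (\<Sum>i\<in>{1..J}. u i)"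
    by (simp add: sum.union_disjoint)
  also have "(\<Sum>i\<in>{-J..-1}. u i) = (\<Sum>i\<in>{1..J}. u i)"
    by (rule sum.reindex_bij_witness[of _ "\<lambda>i. - i" "\<lambda>i. - i"]) (auto simp: assms)
  finally show ?thesis
    using assms by simp
qed

lemma tent_energy_le:
  fixes a M :: int and L K :: nat
  assumes L: "L \<ge> 1" and K: "K \<ge> 1" and "M \<ge> 0"
  defines "P \<equiv> {a-M..a+M}"
  shows "(\<Sum>n\<in>P. \<Sum>m\<in>P. if m = n then 0 else (tent a L m - tent a L n)^2 / real_of_int \<bar>m - n\<bar> ^ 3)
     \<le> 8 * real K / L + 8 / K"
proof -
  define u where "u = truncated_kernel L K"
  define near :: "int \<Rightarrow> real" where "near n = of_bool (\<bar>n - a\<bar> < int L)" for n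
  define B where "B = K / real L ^ 2 + 1 / (real L * K)"
  have near_01: "0 \<le> near n" "near n \<le> 1" for n
    by (auto simp: near_def)
  \<comment> \<open>\<open>near n + near m \<ge> 1\<close> unless both ends lie outside the support of the tent\<close>
  have term_le: "(if m = n then 0 else (tent a L m - tent a L n)^2 / real_of_int \<bar>m - n\<bar> ^ 3)
      \<le> (near n + near m) * u (m - n)" for n m
  proof (cases "m = n \<or> near n = 0 \<and> near m = 0")
    case True
    then show ?thesis
      using L by (auto simp: near_def u_def truncated_kernel_def tent_eq_0)
  next
    case False
    then have "1 \<le> near n + near m"
      by (auto simp: near_def)
    with False tent_diff_le_truncated_kernel[OF L K, of m n a] show ?thesis
      using truncated_kernel_nonneg[of L K "m - n"] mult_right_mono[of 1 "near n + near m" "u (m - n)"]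
      by (simp add: u_def)
  qed
  have row: "(\<Sum>m\<in>P. u (m - n)) \<le> 2 * B" if "n \<in> P" for n
  proof -
    have "(\<Sum>m\<in>P. u (m - n)) \<le> 2 * (\<Sum>i\<in>{1..2*M}. u i)"
      using that \<open>M \<ge> 0\<close> by (intro sum_shifted_even_le)
        (auto simp: P_def u_def truncated_kernel_nonneg truncated_kernel_minus truncated_kernel_def)
    also have "\<dots> \<le> 2 * B"
      using sum_truncated_kernel_le[OF L K, of "2 * M"] unfolding u_def B_def
      by (intro mult_left_mono) simp_all
    finally show ?thesis .
  qed
  have count: "(\<Sum>n\<in>P. near n) \<le> 2 * L"
  proof -
    have "P \<inter> {n. \<bar>n - a\<bar> < int L} \<subseteq> {a - int L + 1 .. a + int L - 1}"
      by auto
    then have "card (P \<inter> {n. \<bar>n - a\<bar> < int L}) \<le> card {a - int L + 1 .. a + int L - 1}"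
      by (intro card_mono) auto
    then show ?thesis
      using L by (simp add: near_def P_def)
  qed
  have "(\<Sum>n\<in>P. \<Sum>m\<in>P. if m = n then 0 else (tent a L m - tent a L n)^2 / real_of_int \<bar>m - n\<bar> ^ 3)
      \<le> (\<Sum>n\<in>P. \<Sum>m\<in>P. (near n + near m) * u (m - n))"
    by (intro sum_mono term_le)
  also have "\<dots> = (\<Sum>n\<in>P. \<Sum>m\<in>P. near n * u (m - n)) + (\<Sum>n\<in>P. \<Sum>m\<in>P. near m * u (m - n))"
    by (simp add: distrib_right sum.distrib)
  also have "(\<Sum>n\<in>P. \<Sum>m\<in>P. near m * u (m - n)) = (\<Sum>m\<in>P. \<Sum>n\<in>P. near m * u (m - n))"
    by (rule sum.swap)
  also have "\<dots> = (\<Sum>n\<in>P. \<Sum>m\<in>P. near n * u (m - n))"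
    by (intro sum.cong refl) (metis u_def truncated_kernel_minus minus_diff_eq)
  also have "(\<Sum>n\<in>P. \<Sum>m\<in>P. near n * u (m - n)) \<le> (\<Sum>n\<in>P. near n * (2 * B))"
    using row near_01 by (intro sum_mono) (simp add: sum_distrib_left[symmetric] mult_left_mono)
  also have "\<dots> = 2 * B * (\<Sum>n\<in>P. near n)"
    by (simp add: sum_distrib_left sum_distrib_right mult_ac)
  also have "\<dots> \<le> 2 * B * (2 * L)"
    using count by (intro mult_left_mono) (simp_all add: B_def)
  also have "2 * B * (2 * L) + 2 * B * (2 * L) = 8 * real K / L + 8 / K"
    using L K by (simp add: B_def field_simps power2_eq_square)
  finally show ?thesis
    by simp
qed

section \<open>The linearised equilibrium equation\<close>

definition spacing :: "(int \<Rightarrow> real) \<Rightarrow> int \<Rightarrow> real" where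
  "spacing x n = x (n + 1) - x n"

text \<open>The force exerted by particle m on particle n, counted positive to the right.\<close>

definition pair_force :: "(int \<Rightarrow> real) \<Rightarrow> int \<Rightarrow> int \<Rightarrow> real" where
  "pair_force x n m = - real_of_int (sgn (m - n)) / (x m - x n)^2"

definition coupling :: "(int \<Rightarrow> real) \<Rightarrow> int \<Rightarrow> int \<Rightarrow> real" where
  "coupling x n m =
     (\<bar>x m - x n\<bar> + \<bar>x (m+1) - x (n+1)\<bar>) / ((x m - x n)^2 * (x (m+1) - x (n+1))^2)"

lemma coupling_sym: "coupling x n m = coupling x m n"
  by (simp add: coupling_def abs_minus_commute power2_commute add.commute)

lemma coupling_nonneg: "0 \<le> coupling x n m"
  by (simp add: coupling_def)

lemma coupling_pos:
  assumes "strict_mono x" "m \<noteq> n"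
  shows "0 < coupling x n m"
proof -
  have "x m \<noteq> x n" "x (m+1) \<noteq> x (n+1)"
    using assms strict_mono_eq[OF assms(1)] by auto
  then show ?thesis
    by (simp add: coupling_def)
qed

lemma equilibrium_pair_force_has_sum:
  assumes "in_equilibrium (\<lambda>d. 1 / d\<^sup>2) x n"
  shows "(pair_force x n has_sum 0) {m. m \<noteq> n}"
proof -
  define S where "S = (\<Sum>\<^sub>\<infinity>m\<in>{m. m < n}. 1 / (x n - x m)^2)"
  have left: "((\<lambda>m. 1 / (x n - x m)^2) has_sum S) {m. m < n}"
    and right: "((\<lambda>m. 1 / (x m - x n)^2) has_sum S) {m. m > n}"
    using assms has_sum_infsum unfolding in_equilibrium_def S_def by metis+
  have "(pair_force x n has_sum S) {m. m < n}"
    using left by (rule has_sum_cong[THEN iffD2, rotated]) (simp add: pair_force_def power2_commute)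
  moreover have "((\<lambda>m. - (1 / (x m - x n)^2)) has_sum - S) {m. m > n}"
    using right by (rule has_sum_uminusI)
  then have "(pair_force x n has_sum - S) {m. m > n}"
    by (rule has_sum_cong[THEN iffD2, rotated]) (simp add: pair_force_def)
  ultimately have "(pair_force x n has_sum (S + - S)) ({m. m < n} \<union> {m. m > n})"
    by (intro has_sum_Un_disjoint) auto
  moreover have "{m. m < n} \<union> {m. m > n} = {m. m \<noteq> n}"
    by auto
  ultimately show ?thesis
    by simp
qed

lemma pair_force_shift_diff:
  assumes "strict_mono x"
  shows "pair_force x (n+1) (m+1) - pair_force x n m = coupling x n m * (spacing x m - spacing x n)"
proof -
  define D where "D = x m - x n"
  define D' where "D' = x (m+1) - x (n+1)"
  have diff: "spacing x m - spacing x n = D' - D"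
    by (simp add: spacing_def D_def D'_def)
  consider "m = n" | "n < m" | "m < n"
    by linarith
  then show ?thesis
  proof cases
    case 1
    then show ?thesis
      by (simp add: pair_force_def)
  next
    case 2
    then have "D > 0" "D' > 0"
      using assms by (auto simp: D_def D'_def strict_mono_def)
    with 2 show ?thesis
      unfolding diff by (simp add: pair_force_def coupling_def D_def[symmetric] D'_def[symmetric])
        (simp add: field_simps power2_eq_square)
  next
    case 3
    then have "D < 0" "D' < 0"
      using assms by (auto simp: D_def D'_def strict_mono_def)
    with 3 show ?thesis
      unfolding diff by (simp add: pair_force_def coupling_def D_def[symmetric] D'_def[symmetric])
        (simp add: field_simps power2_eq_square)
  qed
qed

lemma spacing_harmonic:
  assumes "equilibrium_configuration (\<lambda>d. 1 / d\<^sup>2) x"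
  shows "((\<lambda>m. coupling x n m * (spacing x m - spacing x n)) has_sum 0) UNIV"
proof -
  have mono: "strict_mono x" and eq: "\<And>n. (pair_force x n has_sum 0) {m. m \<noteq> n}"
    using assms equilibrium_pair_force_has_sum
    by (auto simp: equilibrium_configuration_def configuration_def)
  have "inj_on (\<lambda>m. m + 1) {m. m \<noteq> n}"
    by (simp add: inj_on_def)
  moreover have "(\<lambda>m. m + 1) ` {m. m \<noteq> n} = {m. m \<noteq> n + 1}"
    by (auto simp: image_def) (metis add_diff_cancel_right' diff_add_cancel)
  ultimately have "((pair_force x (n+1) \<circ> (\<lambda>m. m + 1)) has_sum 0) {m. m \<noteq> n}"
    using eq[of "n+1"] has_sum_reindex by metis
  then have "((\<lambda>m. pair_force x (n+1) (m+1) + - pair_force x n m) has_sum (0 + - 0)) {m. m \<noteq> n}"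
    unfolding comp_def by (intro has_sum_add has_sum_uminusI eq)
  then have "((\<lambda>m. pair_force x (n+1) (m+1) - pair_force x n m) has_sum 0) UNIV"
    by (subst has_sum_cong_neutral[where T = "{m. m \<noteq> n}"]) (auto simp: pair_force_def)
  then show ?thesis
    by (simp add: pair_force_shift_diff[OF mono])
qed

lemma spacing_bounds_dist:
  assumes lo: "\<And>n. c \<le> spacing x n" and hi: "\<And>n. spacing x n \<le> C" and "0 \<le> c"
  shows "c * real_of_int \<bar>m - n\<bar> \<le> \<bar>x m - x n\<bar> \<and> \<bar>x m - x n\<bar> \<le> C * real_of_int \<bar>m - n\<bar>"
proof -
  have ordered: "c * real_of_int (m - n) \<le> x m - x n \<and> x m - x n \<le> C * real_of_int (m - n)"
    if "n \<le> m" for n m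
    using that
  proof (induction m rule: int_ge_induct)
    case (step m)
    then show ?case
      using lo[of m] hi[of m] by (simp add: spacing_def algebra_simps)
  qed simp
  have "c * real_of_int \<bar>m - n\<bar> \<le> \<bar>x m - x n\<bar> \<and> \<bar>x m - x n\<bar> \<le> C * real_of_int \<bar>m - n\<bar>"
    if "n \<le> m" for n m
  proof -
    have "0 \<le> c * real_of_int (m - n)"
      using that \<open>0 \<le> c\<close> by simp
    then have "\<bar>x m - x n\<bar> = x m - x n" "\<bar>m - n\<bar> = m - n"
      using ordered[OF that] that by auto
    with ordered[OF that] show ?thesis
      by simp
  qed
  then show ?thesis
    by (metis abs_minus_commute linorder_le_cases)
qed

lemma coupling_le:
  assumes lo: "\<And>n. c \<le> spacing x n" and hi: "\<And>n. spacing x n \<le> C" and "0 < c" and "m \<noteq> n"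
  shows "coupling x n m \<le> (2 * C / c ^ 4) / real_of_int \<bar>m - n\<bar> ^ 3"
proof -
  define r where "r = real_of_int \<bar>m - n\<bar>"
  define D where "D = \<bar>x m - x n\<bar>"
  define D' where "D' = \<bar>x (m+1) - x (n+1)\<bar>"
  have cr: "c * r > 0"
    using assms by (simp add: r_def)
  have D: "c * r \<le> D" "D \<le> C * r" and D': "c * r \<le> D'" "D' \<le> C * r"
    using spacing_bounds_dist[OF lo hi, of m n] spacing_bounds_dist[OF lo hi, of "m+1" "n+1"] \<open>0 < c\<close>
    by (simp_all add: r_def D_def D'_def)
  have "(c * r)^2 * (c * r)^2 \<le> D^2 * D'^2"
    using D D' cr by (intro mult_mono power_mono) auto
  then have "(D + D') / (D^2 * D'^2) \<le> (2 * C * r) / ((c * r)^2 * (c * r)^2)"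
    using D D' cr by (intro frac_le) auto
  also have "\<dots> = (2 * C / c ^ 4) / r ^ 3"
    using cr by (simp add: field_simps power2_eq_square power3_eq_cube power4_eq_xxxx)
  finally show ?thesis
    by (simp add: coupling_def D_def D'_def r_def)
qed

section \<open>Bounded harmonic functions of a cubic kernel\<close>

lemma sum_symmetric_intervals_tendsto:
  fixes f :: "int \<Rightarrow> real"
  assumes "(f has_sum s) UNIV"
  shows "(\<lambda>M::nat. \<Sum>m\<in>{a - int M .. a + int M}. f m) \<longlonglongrightarrow> s"
proof -
  have "filterlim (\<lambda>M::nat. {a - int M .. a + int M}) (finite_subsets_at_top UNIV) sequentially"
    unfolding filterlim_finite_subsets_at_top
  proof safe
    fix X :: "int set"
    assume "finite X"
    define b where "b = Max ((\<lambda>y. nat \<bar>y - a\<bar>) ` X)"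
    have "\<And>y. y \<in> X \<Longrightarrow> nat \<bar>y - a\<bar> \<le> b"
      unfolding b_def using \<open>finite X\<close> by (intro Max_ge) auto
    then show "\<forall>\<^sub>F M in sequentially. finite {a - int M..a + int M}
        \<and> X \<subseteq> {a - int M..a + int M} \<and> {a - int M..a + int M} \<subseteq> UNIV"
      by (intro eventually_mono[OF eventually_ge_at_top[of b]]) force
  qed
  from filterlim_compose[OF assms[unfolded has_sum_def] this] show ?thesis
    by simp
qed

text \<open>The cross term of \<open>discrete_caccioppoli\<close> vanishes as the domain exhausts \<open>\<int>\<close>.\<close>

lemma cutoff_flux_tendsto_zero:
  fixes w :: "int \<Rightarrow> int \<Rightarrow> real" and g \<eta> :: "int \<Rightarrow> real"
  assumes harmonic: "\<And>n. ((\<lambda>m. w n m * (g m - g n)) has_sum 0) UNIV"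
    and support: "\<And>n. R < \<bar>n - a\<bar> \<Longrightarrow> \<eta> n = 0"
  shows "(\<lambda>M::nat. \<Sum>n\<in>{a - int M..a + int M}. \<eta> n^2 * g n *
           (\<Sum>m\<in>{a - int M..a + int M}. w n m * (g m - g n))) \<longlonglongrightarrow> 0"
proof -
  define S where "S = {a - R..a + R}"
  define \<Phi> where "\<Phi> M = (\<Sum>n\<in>S. \<eta> n^2 * g n * (\<Sum>m\<in>{a - int M..a + int M}. w n m * (g m - g n)))"
    for M :: nat
  have "\<Phi> \<longlonglongrightarrow> (\<Sum>n\<in>S. \<eta> n^2 * g n * 0)"
    unfolding \<Phi>_def by (intro tendsto_intros sum_symmetric_intervals_tendsto harmonic)
  moreover have "\<forall>\<^sub>F M in sequentially. \<Phi> M = (\<Sum>n\<in>{a - int M..a + int M}. \<eta> n^2 * g n *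
      (\<Sum>m\<in>{a - int M..a + int M}. w n m * (g m - g n)))"
  proof (rule eventually_mono[OF eventually_ge_at_top[of "nat R"]])
    fix M
    assume "nat R \<le> M"
    then show "\<Phi> M = (\<Sum>n\<in>{a - int M..a + int M}. \<eta> n^2 * g n *
        (\<Sum>m\<in>{a - int M..a + int M}. w n m * (g m - g n)))"
      unfolding \<Phi>_def by (intro sum.mono_neutral_left) (auto simp: S_def support)
  qed
  ultimately show ?thesis
    by (simp add: tendsto_cong)
qed

lemma weighted_tent_energy_le:
  fixes w :: "int \<Rightarrow> int \<Rightarrow> real" and a M :: int and L K :: nat
  assumes w_nonneg: "\<And>n m. 0 \<le> w n m"
    and w_le: "\<And>n m. m \<noteq> n \<Longrightarrow> w n m \<le> \<beta> / real_of_int \<bar>m - n\<bar> ^ 3"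
    and "L \<ge> 1" "K \<ge> 1" "M \<ge> 0"
  shows "(\<Sum>n\<in>{a-M..a+M}. \<Sum>m\<in>{a-M..a+M}. w n m * (tent a L m - tent a L n)^2)
      \<le> \<beta> * (8 * real K / L + 8 / K)"
proof -
  have "0 \<le> \<beta>"
    using w_le[of 1 0] w_nonneg[of 0 1] by simp
  have "w n m * (tent a L m - tent a L n)^2
      \<le> \<beta> * (if m = n then 0 else (tent a L m - tent a L n)^2 / real_of_int \<bar>m - n\<bar> ^ 3)" for n m
  proof (cases "m = n")
    case False
    then show ?thesis
      using mult_right_mono[OF w_le zero_le_power2[of "tent a L m - tent a L n"]] by simp
  qed simp
  then have "(\<Sum>n\<in>{a-M..a+M}. \<Sum>m\<in>{a-M..a+M}. w n m * (tent a L m - tent a L n)^2)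
      \<le> \<beta> * (\<Sum>n\<in>{a-M..a+M}. \<Sum>m\<in>{a-M..a+M}.
               if m = n then 0 else (tent a L m - tent a L n)^2 / real_of_int \<bar>m - n\<bar> ^ 3)"
    by (simp add: sum_distrib_left sum_mono)
  also have "\<dots> \<le> \<beta> * (8 * real K / L + 8 / K)"
    using tent_energy_le[of L K M a] assms \<open>0 \<le> \<beta>\<close> by (intro mult_left_mono) auto
  finally show ?thesis .
qed

lemma harmonic_energy_le:
  fixes w :: "int \<Rightarrow> int \<Rightarrow> real" and g :: "int \<Rightarrow> real" and K L :: nat
  assumes w_sym: "\<And>n m. w n m = w m n" and w_nonneg: "\<And>n m. 0 \<le> w n m"
    and w_le: "\<And>n m. m \<noteq> n \<Longrightarrow> w n m \<le> \<beta> / real_of_int \<bar>m - n\<bar> ^ 3"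
    and g_bound: "\<And>n. \<bar>g n\<bar> \<le> G"
    and harmonic: "\<And>n. ((\<lambda>m. w n m * (g m - g n)) has_sum 0) UNIV"
    and L: "L \<ge> 1" and K: "K \<ge> 1"
  shows "w a (a+1) * (g (a+1) - g a)^2 / 2 \<le> 4 * G^2 * \<beta> * (8 * real K / L + 8 / K)"
proof -
  define \<eta> where "\<eta> = tent a L"
  define P where "P M = {a - int M..a + int M}" for M :: nat
  define E where "E M = (\<Sum>n\<in>P M. \<Sum>m\<in>P M. w n m * ((\<eta> n^2 + \<eta> m^2) / 2) * (g m - g n)^2)" for M
  define \<Phi> where "\<Phi> M = (\<Sum>n\<in>P M. \<eta> n^2 * g n * (\<Sum>m\<in>P M. w n m * (g m - g n)))" for M
  have terms_nonneg: "0 \<le> w n m * ((\<eta> n^2 + \<eta> m^2) / 2) * (g m - g n)^2" for n m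
    using w_nonneg by simp
  define R where "R = 4 * G^2 * \<beta> * (8 * real K / L + 8 / K)"
  have bound: "w a (a+1) * (g (a+1) - g a)^2 / 2 \<le> -4 * \<Phi> M + R" if "M \<ge> 1" for M
  proof -
    have "w a (a+1) * (1 / 2) * (g (a+1) - g a)^2
        \<le> w a (a+1) * ((\<eta> a^2 + \<eta> (a+1)^2) / 2) * (g (a+1) - g a)^2"
      by (intro mult_right_mono mult_left_mono) (simp_all add: \<eta>_def w_nonneg)
    then have "w a (a+1) * (g (a+1) - g a)^2 / 2
        \<le> w a (a+1) * ((\<eta> a^2 + \<eta> (a+1)^2) / 2) * (g (a+1) - g a)^2"
      by simp
    also have "\<dots> \<le> (\<Sum>m\<in>P M. w a m * ((\<eta> a^2 + \<eta> m^2) / 2) * (g m - g a)^2)"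
      using that terms_nonneg by (intro member_le_sum) (auto simp: P_def)
    also have "\<dots> \<le> E M"
      unfolding E_def using that terms_nonneg by (intro member_le_sum sum_nonneg) (auto simp: P_def)
    also have "\<dots> \<le> -4 * \<Phi> M + 4 * G^2 * (\<Sum>n\<in>P M. \<Sum>m\<in>P M. w n m * (\<eta> m - \<eta> n)^2)"
      unfolding E_def \<Phi>_def P_def by (rule discrete_caccioppoli[OF _ w_sym w_nonneg g_bound]) simp
    also have "\<dots> \<le> -4 * \<Phi> M + 4 * G^2 * (\<beta> * (8 * real K / L + 8 / K))"
      using weighted_tent_energy_le[OF w_nonneg w_le L K, of "int M" a]
      by (simp add: P_def \<eta>_def mult_left_mono)
    finally show ?thesis
      by (simp add: R_def)
  qed
  have "\<Phi> \<longlonglongrightarrow> 0"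
    unfolding \<Phi>_def P_def \<eta>_def
    by (rule cutoff_flux_tendsto_zero[OF harmonic, of "int L"]) (use L in \<open>auto intro: tent_eq_0\<close>)
  then have "(\<lambda>M. -4 * \<Phi> M + R) \<longlonglongrightarrow> -4 * 0 + R"
    by (intro tendsto_intros)
  from tendsto_lowerbound[OF this eventually_mono[OF eventually_ge_at_top bound]] show ?thesis
    by (simp add: R_def)
qed

text \<open>Liouville property: with \<open>L = K^2\<close> the bound of \<open>harmonic_energy_le\<close> is
  \<open>64 G^2 \<beta> / K\<close>, which tends to 0.\<close>

lemma harmonic_cubic_kernel_step_eq:
  fixes w :: "int \<Rightarrow> int \<Rightarrow> real" and g :: "int \<Rightarrow> real"
  assumes "\<And>n m. w n m = w m n" and "\<And>n m. 0 \<le> w n m"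
    and "\<And>n m. m \<noteq> n \<Longrightarrow> w n m \<le> \<beta> / real_of_int \<bar>m - n\<bar> ^ 3"
    and "\<And>n. \<bar>g n\<bar> \<le> G"
    and "\<And>n. ((\<lambda>m. w n m * (g m - g n)) has_sum 0) UNIV"
    and "0 < w a (a+1)"
  shows "g (a+1) = g a"
proof -
  have "\<forall>\<^sub>F K in sequentially. w a (a+1) * (g (a+1) - g a)^2 / 2 \<le> 64 * G^2 * \<beta> / real K"
  proof (rule eventually_mono[OF eventually_ge_at_top[of 1]])
    fix K :: nat
    assume K: "K \<ge> 1"
    then have "w a (a+1) * (g (a+1) - g a)^2 / 2 \<le> 4 * G^2 * \<beta> * (8 * real K / real (K * K) + 8 / K)"
      using harmonic_energy_le[OF assms(1-5), of "K * K" K a] by simp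
    also have "\<dots> = 64 * G^2 * \<beta> / K"
      using K by (simp add: field_simps)
    finally show "w a (a+1) * (g (a+1) - g a)^2 / 2 \<le> 64 * G^2 * \<beta> / K" .
  qed
  then have "w a (a+1) * (g (a+1) - g a)^2 / 2 \<le> 0"
    by (rule tendsto_lowerbound[OF lim_const_over_n]) simp
  with \<open>0 < w a (a+1)\<close> show ?thesis
    by (simp add: zero_less_mult_iff mult_le_0_iff)
qed

lemma int_shift_invariant_const:
  fixes f :: "int \<Rightarrow> 'a"
  assumes "\<And>n. f (n + 1) = f n"
  shows "f n = f 0"
proof (induction n rule: int_induct[where k = 0])
  case (step1 i)
  then show ?case
    using assms[of i] by simp
next
  case (step2 i)
  then show ?case
    using assms[of "i - 1"] by simp
qed simp

theorem mainTheorem5: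
  fixes x :: "int \<Rightarrow> real"
  assumes "equilibrium_configuration (\<lambda>d. 1 / d\<^sup>2) x"
    and "uniformly_discrete x"
    and "\<exists>N::int. \<exists>k::int. \<exists>t::real. k \<ge> 1 \<and> t > 0 \<and>
           ((\<forall>n\<ge>N. x (n + k) = x n + t) \<or> (\<forall>n\<le>N. x (n + k) = x n + t))"
  shows "trivial_configuration x"
proof -
  have mono: "strict_mono x"
    using assms(1) by (simp add: equilibrium_configuration_def configuration_def)
  obtain c C where "0 < c" and lo: "\<And>n. c \<le> spacing x n" and hi: "\<And>n. spacing x n \<le> C"
    using assms(2) unfolding uniformly_discrete_def spacing_def by (metis add_diff_cancel_right')
  have "spacing x (n + 1) = spacing x n" for n
  proof (rule harmonic_cubic_kernel_step_eq)
    show "coupling x n m = coupling x m n" "0 \<le> coupling x n m" for n m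
      by (rule coupling_sym coupling_nonneg)+
    show "coupling x n m \<le> (2 * C / c ^ 4) / real_of_int \<bar>m - n\<bar> ^ 3" if "m \<noteq> n" for n m
      using coupling_le[OF lo hi \<open>0 < c\<close> that] .
    show "\<bar>spacing x m\<bar> \<le> C" for m
      using lo[of m] hi[of m] \<open>0 < c\<close> by simp
    show "((\<lambda>m. coupling x k m * (spacing x m - spacing x k)) has_sum 0) UNIV" for k
      by (rule spacing_harmonic[OF assms(1)])
    show "0 < coupling x n (n + 1)"
      by (rule coupling_pos[OF mono]) simp
  qed
  then show ?thesis
    unfolding trivial_configuration_def
    using int_shift_invariant_const[of "spacing x"] by (auto simp: spacing_def)
qed

end
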